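(* Let $\ell\ge1$, $n\ge2$, $N=n^\ell$, $T=\ell(n-1)$, and consider the EBS connection schedule of order $\ell$. For every physical edge $e$ of its virtual topology, the number of triples $(t,a,b)\in\mathbb Z\times(\mathbb Z/n)^\ell\times(\mathbb Z/n)^\ell$ such that the EBS semi-path from $(a,t)$ to $b$ traverses $e$ is exactly $T\,n^{\ell-1}$.
   Context: The virtual topology of a connection schedule $(\pi_t)_{t\in\mathbb Z}$ (periodic with period $T$) is the directed graph on (nodes)$\times\mathbb Z$ with virtual edges $(i,t)\to(i,t+1)$ and physical edges $(i,t)\to(\pi_t(i),t+1)$. EBS connection schedule of order $\ell$: nodes are $(\mathbb Z/n)^\ell$; $\mathbf e_p$ ($0\le p<\ell$) is the standard basis vector; period $T=\ell(n-1)$; for $0\le p<\ell$, $1\le s\le n-1$, $\pi_{(n-1)p+s-1}(\mathbf i)=\mathbf i+s\mathbf e_p$, and $\pi_t=\pi_{t\bmod T}$. The EBS semi-path from $(a,t)$ to $b$ is built greedily: at the current vertex $(x,t')$, stop if $x=b$; otherwise write $t'\bmod T=(n-1)p+s-1$ and, if $(b-x)_p=s$ in $\mathbb Z/n$, traverse the physical edge to $(x+s\mathbf e_p,t'+1)$, else the virtual edge to $(x,t'+1)$. *)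

theory Defs
  imports Main
begin

text \<open>Nodes of the EBS schedule of order l: elements of (Z/n)^l, represented as
  lists of length l with entries in {0..<n}. Times are integers.\<close>

definition ebs_nodes :: "nat \<Rightarrow> nat \<Rightarrow> nat list set" where
  "ebs_nodes n l = {x. length x = l \<and> (\<forall>c\<in>set x. c < n)}"

definition ebs_T :: "nat \<Rightarrow> nat \<Rightarrow> nat" where
  "ebs_T n l = l * (n - 1)"

text \<open>Write t mod T = (n-1) p + s - 1 with 0 <= p < l, 1 <= s <= n-1.\<close>

definition ebs_phase :: "nat \<Rightarrow> nat \<Rightarrow> int \<Rightarrow> nat" where
  "ebs_phase n l t = nat (t mod int (ebs_T n l))"

definition ebs_p :: "nat \<Rightarrow> nat \<Rightarrow> int \<Rightarrow> nat" where
  "ebs_p n l t = ebs_phase n l t div (n - 1)"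

definition ebs_s :: "nat \<Rightarrow> nat \<Rightarrow> int \<Rightarrow> nat" where
  "ebs_s n l t = ebs_phase n l t mod (n - 1) + 1"

definition ebs_pi :: "nat \<Rightarrow> nat \<Rightarrow> int \<Rightarrow> nat list \<Rightarrow> nat list" where
  "ebs_pi n l t x = x[ebs_p n l t := (x ! ebs_p n l t + ebs_s n l t) mod n]"

definition ebs_diff :: "nat \<Rightarrow> nat list \<Rightarrow> nat list \<Rightarrow> nat \<Rightarrow> nat" where
  "ebs_diff n b x p = (b ! p + n - x ! p) mod n"

definition ebs_takes_phys :: "nat \<Rightarrow> nat \<Rightarrow> nat list \<Rightarrow> nat list \<times> int \<Rightarrow> bool" where
  "ebs_takes_phys n l b v = (fst v \<noteq> b \<and> ebs_diff n b (fst v) (ebs_p n l (snd v)) = ebs_s n l (snd v))"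

text \<open>One greedy step of the semi-path towards b (the vertex is kept fixed once b is reached,
  i.e. the path has stopped).\<close>

definition ebs_step :: "nat \<Rightarrow> nat \<Rightarrow> nat list \<Rightarrow> nat list \<times> int \<Rightarrow> nat list \<times> int" where
  "ebs_step n l b v =
     (if fst v = b then v
      else if ebs_takes_phys n l b v then (ebs_pi n l (snd v) (fst v), snd v + 1)
      else (fst v, snd v + 1))"

definition ebs_traverses ::
  "nat \<Rightarrow> nat \<Rightarrow> int \<Rightarrow> nat list \<Rightarrow> nat list \<Rightarrow> (nat list \<times> int) \<times> (nat list \<times> int) \<Rightarrow> bool" where
  "ebs_traverses n l t a b e =
     (\<exists>k. let v = (ebs_step n l b ^^ k) (a, t) in
            ebs_takes_phys n l b v \<and> e = (v, (ebs_pi n l (snd v) (fst v), snd v + 1)))"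

definition ebs_physical_edge ::
  "nat \<Rightarrow> nat \<Rightarrow> (nat list \<times> int) \<times> (nat list \<times> int) \<Rightarrow> bool" where
  "ebs_physical_edge n l e = (\<exists>i t. i \<in> ebs_nodes n l \<and> e = ((i, t), (ebs_pi n l t i, t + 1)))"

end

(* The greedy rule corrects coordinate q of the current node exactly when the phase
   (q, (b - a)_q) comes round, and every phase occurs once per period T.  Hence the
   semi-path from (a, t) is, after k steps, at the node agreeing with b in the coordinates
   whose phase occurred among t, ..., t + k - 1 and with a elsewhere.  It traverses the
   physical edge leaving (i, t0) in phase (p, s) iff it is at i at time t0, (b - a)_p = s and
   t0 - T < t <= t0.  Conversely, the offset t0 - t in {0, ..., T - 1} and the displacement
   d = b - a with d_p = s determine a and b from i, and every such choice gives a traversal;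
   this yields T n^(l-1) triples. *)

theory Submission
  imports Defs
begin

lemma ebs_T_pos: "l \<ge> 1 \<Longrightarrow> n \<ge> 2 \<Longrightarrow> 0 < ebs_T n l"
  by (simp add: ebs_T_def)

lemma ebs_phase_less:
  assumes "l \<ge> 1" "n \<ge> 2"
  shows "ebs_phase n l t < ebs_T n l"
  using ebs_T_pos[OF assms] unfolding ebs_phase_def
  by (simp add: nat_less_iff)

lemma ebs_p_less:
  assumes "l \<ge> 1" "n \<ge> 2"
  shows "ebs_p n l t < l"
  using ebs_phase_less[OF assms] assms
  by (simp add: ebs_p_def ebs_T_def div_less_iff_less_mult)

lemma ebs_s_pos: "0 < ebs_s n l t"
  by (simp add: ebs_s_def)

lemma ebs_s_less: "n \<ge> 2 \<Longrightarrow> ebs_s n l t < n"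
proof -
  assume "n \<ge> 2"
  then have "ebs_phase n l t mod (n - 1) < n - 1" by simp
  then show ?thesis unfolding ebs_s_def by linarith
qed

lemma ebs_p_s_eq_iff:
  assumes "l \<ge> 1" "n \<ge> 2"
  shows "ebs_p n l t = ebs_p n l t' \<and> ebs_s n l t = ebs_s n l t'
    \<longleftrightarrow> t mod int (ebs_T n l) = t' mod int (ebs_T n l)"
proof -
  have "ebs_p n l t = ebs_p n l t' \<and> ebs_s n l t = ebs_s n l t'
      \<longleftrightarrow> ebs_phase n l t = ebs_phase n l t'"
    unfolding ebs_p_def ebs_s_def by (metis div_mult_mod_eq add_right_cancel)
  also have "\<dots> \<longleftrightarrow> t mod int (ebs_T n l) = t' mod int (ebs_T n l)"
    using ebs_T_pos[OF assms] by (auto simp: ebs_phase_def nat_eq_iff2)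
  finally show ?thesis .
qed

definition ebs_phase_seen :: "nat \<Rightarrow> nat \<Rightarrow> int \<Rightarrow> nat \<Rightarrow> nat \<Rightarrow> nat \<Rightarrow> bool" where
  "ebs_phase_seen n l t k q c \<longleftrightarrow> (\<exists>k'<k. ebs_p n l (t + int k') = q \<and> ebs_s n l (t + int k') = c)"

lemma ebs_phase_seen_Suc:
  "ebs_phase_seen n l t (Suc k) q c
    \<longleftrightarrow> ebs_phase_seen n l t k q c \<or> (ebs_p n l (t + int k) = q \<and> ebs_s n l (t + int k) = c)"
  unfolding ebs_phase_seen_def using less_Suc_eq by auto

text \<open>Every phase occurs exactly once per period.\<close>

lemma ebs_phase_seen_current_iff:
  assumes l: "l \<ge> 1" and n: "n \<ge> 2"
  shows "ebs_phase_seen n l (t0 - int k) k (ebs_p n l t0) (ebs_s n l t0) \<longleftrightarrow> ebs_T n l \<le> k"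
proof
  assume "ebs_phase_seen n l (t0 - int k) k (ebs_p n l t0) (ebs_s n l t0)"
  then obtain k' where "k' < k" and
    "t0 mod int (ebs_T n l) = (t0 - int k + int k') mod int (ebs_T n l)"
    unfolding ebs_phase_seen_def ebs_p_s_eq_iff[OF l n] by metis
  then have "int (ebs_T n l) dvd int k - int k'" and "0 < int k - int k'"
    by (auto simp: mod_eq_dvd_iff)
  then show "ebs_T n l \<le> k"
    using zdvd_imp_le by fastforce
next
  assume le: "ebs_T n l \<le> k"
  then have "(t0 - int k + int (k - ebs_T n l)) mod int (ebs_T n l) = t0 mod int (ebs_T n l)"
    by simp
  then show "ebs_phase_seen n l (t0 - int k) k (ebs_p n l t0) (ebs_s n l t0)"
    unfolding ebs_phase_seen_def ebs_p_s_eq_iff[OF l n]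
    using ebs_T_pos[OF l n] le by (intro exI[of _ "k - ebs_T n l"]) auto
qed

lemma int_add_diff_mod: "(x::nat) \<le> n \<Longrightarrow> int ((y + n - x) mod n) = (int y - int x) mod int n"
proof -
  assume "x \<le> n"
  then have "int ((y + n - x) mod n) = (int y + int n - int x) mod int n"
    by (simp add: of_nat_mod)
  also have "\<dots> = (int y - int x) mod int n"
    by (metis add.commute add_diff_eq mod_add_self1)
  finally show ?thesis .
qed

lemma add_diff_mod_cancel:
  assumes "(x::nat) < n" "y < n"
  shows "(x + (y + n - x) mod n) mod n = y"
proof -
  have "int ((x + (y + n - x) mod n) mod n) = (int x + (int y - int x) mod int n) mod int n"
    using int_add_diff_mod[of x n y] assms by (simp add: of_nat_mod)
  also have "\<dots> = int y" using assms by (simp add: mod_add_right_eq)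
  finally show ?thesis by simp
qed

lemma add_mod_diff_cancel:
  assumes "(x::nat) < n" "y < n"
  shows "((x + y) mod n + n - x) mod n = y"
proof -
  have "int (((x + y) mod n + n - x) mod n) = (int ((x + y) mod n) - int x) mod int n"
    using int_add_diff_mod[of x n] assms by simp
  also have "\<dots> = int y" using assms by (simp add: of_nat_mod mod_diff_left_eq)
  finally show ?thesis by simp
qed

lemma diff_mod_diff_cancel:
  assumes "(x::nat) < n" "y < n"
  shows "(x + n - (x + n - y) mod n) mod n = y"
proof -
  have "int ((x + n - (x + n - y) mod n) mod n) = (int x - (int x - int y) mod int n) mod int n"
    using int_add_diff_mod[of "(x + n - y) mod n" n] int_add_diff_mod[of y n x] assms by simp
  also have "\<dots> = int y" using assms by (simp add: mod_diff_right_eq)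
  finally show ?thesis by simp
qed

lemma ebs_diff_self [simp]: "ebs_diff n b b p = 0"
  by (simp add: ebs_diff_def)

lemma ebs_nodes_nth_less: "x \<in> ebs_nodes n l \<Longrightarrow> q < l \<Longrightarrow> x ! q < n"
  unfolding ebs_nodes_def by auto

lemma length_ebs_nodes: "x \<in> ebs_nodes n l \<Longrightarrow> length x = l"
  unfolding ebs_nodes_def by auto

lemma map_nth_mem_ebs_nodes: "(\<And>q. q < l \<Longrightarrow> f q < n) \<Longrightarrow> map f [0..<l] \<in> ebs_nodes n l"
  unfolding ebs_nodes_def by auto

lemma ebs_nodes_eq_lists: "ebs_nodes n l = {xs. set xs \<subseteq> {..<n} \<and> length xs = l}"
  unfolding ebs_nodes_def by auto

lemma card_ebs_nodes_nth_eq: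
  assumes "p < l" "c < n"
  shows "card {d \<in> ebs_nodes n l. d ! p = c} = n ^ (l - 1)"
proof -
  define ins :: "nat list \<Rightarrow> nat list" where "ins x = take p x @ c # drop p x" for x
  define del :: "nat list \<Rightarrow> nat list" where "del d = take p d @ drop (Suc p) d" for d
  have "bij_betw ins (ebs_nodes n (l - 1)) {d \<in> ebs_nodes n l. d ! p = c}"
  proof (rule bij_betw_byWitness[where f' = del])
    show "\<forall>x\<in>ebs_nodes n (l - 1). del (ins x) = x"
      using assms by (auto simp: ins_def del_def ebs_nodes_def)
    show "\<forall>d\<in>{d \<in> ebs_nodes n l. d ! p = c}. ins (del d) = d"
      using assms by (auto simp: ins_def del_def ebs_nodes_def id_take_nth_drop[symmetric])
    show "ins ` ebs_nodes n (l - 1) \<subseteq> {d \<in> ebs_nodes n l. d ! p = c}"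
      using assms by (auto simp: ins_def ebs_nodes_def nth_append dest!: in_set_takeD in_set_dropD)
    show "del ` {d \<in> ebs_nodes n l. d ! p = c} \<subseteq> ebs_nodes n (l - 1)"
      using assms by (auto simp: del_def ebs_nodes_def dest!: in_set_takeD in_set_dropD)
  qed
  moreover have "card (ebs_nodes n (l - 1)) = n ^ (l - 1)"
    unfolding ebs_nodes_eq_lists by (simp add: card_lists_length_eq)
  ultimately show ?thesis
    by (simp add: bij_betw_same_card)
qed

section \<open>The semi-path in closed form\<close>

text \<open>The node reached by the semi-path from \<open>(a, t)\<close> to \<open>b\<close> after \<open>k\<close> steps
  (see \<open>ebs_step_funpow\<close>).\<close>

definition ebs_path_node :: "nat \<Rightarrow> nat \<Rightarrow> nat list \<Rightarrow> nat list \<Rightarrow> int \<Rightarrow> nat \<Rightarrow> nat list" where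
  "ebs_path_node n l a b t k =
     map (\<lambda>q. if ebs_phase_seen n l t k q (ebs_diff n b a q) then b ! q else a ! q) [0..<l]"

lemma length_ebs_path_node [simp]: "length (ebs_path_node n l a b t k) = l"
  by (simp add: ebs_path_node_def)

lemma nth_ebs_path_node:
  "q < l \<Longrightarrow> ebs_path_node n l a b t k ! q =
    (if ebs_phase_seen n l t k q (ebs_diff n b a q) then b ! q else a ! q)"
  by (simp add: ebs_path_node_def)

lemma ebs_path_node_0: "length a = l \<Longrightarrow> ebs_path_node n l a b t 0 = a"
  using map_nth[of a] by (simp add: ebs_path_node_def ebs_phase_seen_def)

lemma ebs_path_node_Suc:
  assumes "p = ebs_p n l (t + int k)" "s = ebs_s n l (t + int k)"
  shows "ebs_path_node n l a b t (Suc k) =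
    (if ebs_diff n b a p = s then (ebs_path_node n l a b t k)[p := b ! p]
     else ebs_path_node n l a b t k)"
proof (rule nth_equalityI)
  fix q assume "q < length (ebs_path_node n l a b t (Suc k))"
  then show "ebs_path_node n l a b t (Suc k) ! q =
    (if ebs_diff n b a p = s then (ebs_path_node n l a b t k)[p := b ! p]
     else ebs_path_node n l a b t k) ! q"
    using assms by (cases "q = p") (auto simp: nth_ebs_path_node ebs_phase_seen_Suc)
qed simp

lemma ebs_path_node_Suc_eq_target:
  "ebs_path_node n l a b t k = b \<Longrightarrow> ebs_path_node n l a b t (Suc k) = b"
  by (metis ebs_path_node_Suc list_update_id)

lemma ebs_step_path_node:
  assumes l: "l \<ge> 1" and n: "n \<ge> 2" and a: "a \<in> ebs_nodes n l" and b: "b \<in> ebs_nodes n l"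
    and ne: "ebs_path_node n l a b t k \<noteq> b"
  shows "ebs_step n l b (ebs_path_node n l a b t k, t + int k)
    = (ebs_path_node n l a b t (Suc k), t + int (Suc k))"
proof -
  define X where "X = ebs_path_node n l a b t k"
  define p where "p = ebs_p n l (t + int k)"
  define s where "s = ebs_s n l (t + int k)"
  have p: "p < l" using ebs_p_less[OF l n] by (simp add: p_def)
  have s: "0 < s" "s < n" using ebs_s_pos ebs_s_less[OF n] by (simp_all add: s_def)
  have Xp: "X ! p = a ! p \<or> X ! p = b ! p"
    using p by (simp add: X_def nth_ebs_path_node)
  have Suc: "ebs_path_node n l a b t (Suc k) = (if ebs_diff n b a p = s then X[p := b ! p] else X)"
    using ebs_path_node_Suc[OF p_def s_def] by (simp add: X_def)
  show ?thesis
  proof (cases "ebs_diff n b X p = s")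
    case True
    then have "X ! p = a ! p" using Xp s by (auto simp: ebs_diff_def)
    with True have diff: "ebs_diff n b a p = s" by (simp add: ebs_diff_def)
    have "(a ! p + s) mod n = b ! p"
      using diff add_diff_mod_cancel[of "a ! p" n "b ! p"] ebs_nodes_nth_less[OF _ p] a b
      by (simp add: ebs_diff_def)
    then have "ebs_pi n l (t + int k) X = X[p := b ! p]"
      using \<open>X ! p = a ! p\<close> by (simp add: ebs_pi_def p_def s_def)
    then show ?thesis
      using True ne diff Suc
      by (simp add: ebs_step_def ebs_takes_phys_def X_def p_def s_def)
  next
    case False
    have "ebs_path_node n l a b t (Suc k) = X"
    proof (cases "ebs_diff n b a p = s")
      case True
      then have "X ! p = b ! p" using False Xp by (auto simp: ebs_diff_def)
      then show ?thesis using True Suc by (metis list_update_id)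
    qed (use Suc in simp)
    then show ?thesis
      using False ne by (simp add: ebs_step_def ebs_takes_phys_def X_def p_def s_def)
  qed
qed

lemma ebs_step_funpow:
  assumes l: "l \<ge> 1" and n: "n \<ge> 2" and a: "a \<in> ebs_nodes n l" and b: "b \<in> ebs_nodes n l"
  shows "fst ((ebs_step n l b ^^ k) (a, t)) = ebs_path_node n l a b t k
    \<and> (ebs_path_node n l a b t k \<noteq> b
         \<longrightarrow> (ebs_step n l b ^^ k) (a, t) = (ebs_path_node n l a b t k, t + int k))"
proof (induction k)
  case 0
  show ?case using length_ebs_nodes[OF a] by (simp add: ebs_path_node_0)
next
  case (Suc k)
  show ?case
  proof (cases "ebs_path_node n l a b t k = b")
    case True
    then show ?thesis
      using Suc.IH ebs_path_node_Suc_eq_target[OF True] by (simp add: ebs_step_def)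
  next
    case False
    then show ?thesis
      using Suc.IH ebs_step_path_node[OF l n a b False] by simp
  qed
qed

lemma ebs_traverses_iff:
  assumes l: "l \<ge> 1" and n: "n \<ge> 2" and a: "a \<in> ebs_nodes n l" and b: "b \<in> ebs_nodes n l"
  shows "ebs_traverses n l t a b ((i, t0), (ebs_pi n l t0 i, t0 + 1)) \<longleftrightarrow>
    (\<exists>k. ebs_path_node n l a b t k = i \<and> t + int k = t0
         \<and> ebs_diff n b i (ebs_p n l t0) = ebs_s n l t0)"
proof
  assume "ebs_traverses n l t a b ((i, t0), (ebs_pi n l t0 i, t0 + 1))"
  then obtain k where phys: "ebs_takes_phys n l b ((ebs_step n l b ^^ k) (a, t))"
    and v: "(ebs_step n l b ^^ k) (a, t) = (i, t0)"
    unfolding ebs_traverses_def Let_def by auto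
  have "ebs_path_node n l a b t k \<noteq> b"
    using phys ebs_step_funpow[OF l n a b, of k t] by (simp add: ebs_takes_phys_def)
  then show "\<exists>k. ebs_path_node n l a b t k = i \<and> t + int k = t0
      \<and> ebs_diff n b i (ebs_p n l t0) = ebs_s n l t0"
    using v phys ebs_step_funpow[OF l n a b, of k t]
    by (intro exI[of _ k]) (simp add: ebs_takes_phys_def)
next
  assume "\<exists>k. ebs_path_node n l a b t k = i \<and> t + int k = t0
      \<and> ebs_diff n b i (ebs_p n l t0) = ebs_s n l t0"
  then obtain k where X: "ebs_path_node n l a b t k = i" "t + int k = t0"
    and diff: "ebs_diff n b i (ebs_p n l t0) = ebs_s n l t0" by blast
  have "i \<noteq> b" using diff ebs_s_pos[of n l t0] by auto
  then have "(ebs_step n l b ^^ k) (a, t) = (i, t0)"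
    using X ebs_step_funpow[OF l n a b, of k t] by simp
  then show "ebs_traverses n l t a b ((i, t0), (ebs_pi n l t0 i, t0 + 1))"
    unfolding ebs_traverses_def Let_def using \<open>i \<noteq> b\<close> diff
    by (intro exI[of _ k]) (simp add: ebs_takes_phys_def)
qed

section \<open>Counting the semi-paths through an edge\<close>

text \<open>Source and target of the semi-path that starts at time \<open>t0 - j\<close> with displacement
  \<open>d = b - a\<close> and is at node \<open>i\<close> at time \<open>t0\<close>.\<close>

definition ebs_source :: "nat \<Rightarrow> nat \<Rightarrow> nat list \<Rightarrow> int \<Rightarrow> nat \<Rightarrow> nat list \<Rightarrow> nat list" where
  "ebs_source n l i t0 j d =
     map (\<lambda>q. if ebs_phase_seen n l (t0 - int j) j q (d ! q) then (i ! q + n - d ! q) mod n else i ! q)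
       [0..<l]"

definition ebs_target :: "nat \<Rightarrow> nat \<Rightarrow> nat list \<Rightarrow> int \<Rightarrow> nat \<Rightarrow> nat list \<Rightarrow> nat list" where
  "ebs_target n l i t0 j d =
     map (\<lambda>q. if ebs_phase_seen n l (t0 - int j) j q (d ! q) then i ! q else (i ! q + d ! q) mod n)
       [0..<l]"

lemma length_ebs_source [simp]: "length (ebs_source n l i t0 j d) = l"
  by (simp add: ebs_source_def)

lemma length_ebs_target [simp]: "length (ebs_target n l i t0 j d) = l"
  by (simp add: ebs_target_def)

lemma ebs_source_mem_ebs_nodes: "i \<in> ebs_nodes n l \<Longrightarrow> ebs_source n l i t0 j d \<in> ebs_nodes n l"
  unfolding ebs_source_def
  by (rule map_nth_mem_ebs_nodes) (auto dest: ebs_nodes_nth_less)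

lemma ebs_target_mem_ebs_nodes: "i \<in> ebs_nodes n l \<Longrightarrow> ebs_target n l i t0 j d \<in> ebs_nodes n l"
  unfolding ebs_target_def
  by (rule map_nth_mem_ebs_nodes) (auto dest: ebs_nodes_nth_less)

lemma ebs_diff_target_source:
  assumes "i \<in> ebs_nodes n l" "d \<in> ebs_nodes n l" "q < l"
  shows "ebs_diff n (ebs_target n l i t0 j d) (ebs_source n l i t0 j d) q = d ! q"
  using assms ebs_nodes_nth_less[OF assms(1)] ebs_nodes_nth_less[OF assms(2)]
    diff_mod_diff_cancel[of "i ! q" n "d ! q"] add_mod_diff_cancel[of "i ! q" n "d ! q"]
  by (simp add: ebs_source_def ebs_target_def ebs_diff_def)

lemma ebs_path_node_source_target:
  assumes "i \<in> ebs_nodes n l" "d \<in> ebs_nodes n l"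
  shows "ebs_path_node n l (ebs_source n l i t0 j d) (ebs_target n l i t0 j d) (t0 - int j) j = i"
  using assms ebs_diff_target_source[OF assms] length_ebs_nodes[OF assms(1)]
  by (intro nth_equalityI) (simp_all add: nth_ebs_path_node ebs_source_def ebs_target_def)

lemma ebs_traverses_source_target:
  assumes l: "l \<ge> 1" and n: "n \<ge> 2" and i: "i \<in> ebs_nodes n l" and d: "d \<in> ebs_nodes n l"
    and j: "j < ebs_T n l" and dp: "d ! ebs_p n l t0 = ebs_s n l t0"
  shows "ebs_traverses n l (t0 - int j) (ebs_source n l i t0 j d) (ebs_target n l i t0 j d)
    ((i, t0), (ebs_pi n l t0 i, t0 + 1))"
proof -
  let ?p = "ebs_p n l t0" and ?s = "ebs_s n l t0"
  have p: "?p < l" using ebs_p_less[OF l n] .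
  have "\<not> ebs_phase_seen n l (t0 - int j) j ?p ?s"
    using ebs_phase_seen_current_iff[OF l n] j by simp
  then have "ebs_target n l i t0 j d ! ?p = (i ! ?p + ?s) mod n"
    using p dp by (simp add: ebs_target_def)
  then have "ebs_diff n (ebs_target n l i t0 j d) i ?p = ?s"
    using add_mod_diff_cancel[OF ebs_nodes_nth_less[OF i p] ebs_s_less[OF n]]
    by (simp add: ebs_diff_def)
  then show ?thesis
    using ebs_path_node_source_target[OF i d]
    by (subst ebs_traverses_iff[OF l n ebs_source_mem_ebs_nodes[OF i] ebs_target_mem_ebs_nodes[OF i]])
      (intro exI[of _ j], simp)
qed

lemma ebs_traverses_imp_source_target:
  assumes l: "l \<ge> 1" and n: "n \<ge> 2" and a: "a \<in> ebs_nodes n l" and b: "b \<in> ebs_nodes n l"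
    and tr: "ebs_traverses n l t a b ((i, t0), (ebs_pi n l t0 i, t0 + 1))"
  obtains j d where "j < ebs_T n l" "d \<in> ebs_nodes n l" "d ! ebs_p n l t0 = ebs_s n l t0"
    "t = t0 - int j" "a = ebs_source n l i t0 j d" "b = ebs_target n l i t0 j d"
proof -
  let ?p = "ebs_p n l t0" and ?s = "ebs_s n l t0"
  obtain k where X: "ebs_path_node n l a b t k = i" and tk: "t + int k = t0"
    and diff: "ebs_diff n b i ?p = ?s"
    using tr ebs_traverses_iff[OF l n a b] by blast
  then have t: "t = t0 - int k" by simp
  have p: "?p < l" using ebs_p_less[OF l n] .
  have i_nth: "i ! q = (if ebs_phase_seen n l t k q (ebs_diff n b a q) then b ! q else a ! q)"
    if "q < l" for q
    using X nth_ebs_path_node[OF that, of n a b t k] by simp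
  have unseen: "\<not> ebs_phase_seen n l t k ?p (ebs_diff n b a ?p)"
  proof
    assume "ebs_phase_seen n l t k ?p (ebs_diff n b a ?p)"
    then have "ebs_diff n b i ?p = 0" using i_nth[OF p] by (simp add: ebs_diff_def)
    then show False using diff ebs_s_pos[of n l t0] by simp
  qed
  with diff have da: "ebs_diff n b a ?p = ?s"
    using i_nth[OF p] by (simp add: ebs_diff_def)
  have k: "k < ebs_T n l"
    using unseen ebs_phase_seen_current_iff[OF l n, of t0 k] by (simp add: t da)
  define d where "d = map (ebs_diff n b a) [0..<l]"
  have d: "d \<in> ebs_nodes n l"
    using n by (auto simp: d_def ebs_diff_def intro: map_nth_mem_ebs_nodes)
  have source: "ebs_source n l i t0 k d ! q = a ! q" and target: "ebs_target n l i t0 k d ! q = b ! q"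
    if q: "q < l" for q
    using i_nth[OF q] ebs_nodes_nth_less[OF a q] ebs_nodes_nth_less[OF b q]
      diff_mod_diff_cancel[of "b ! q" n "a ! q"] add_diff_mod_cancel[of "a ! q" n "b ! q"]
    by (simp_all add: q ebs_source_def ebs_target_def d_def t ebs_diff_def)
  have "a = ebs_source n l i t0 k d"
    using source length_ebs_nodes[OF a] by (intro nth_equalityI) simp_all
  moreover have "b = ebs_target n l i t0 k d"
    using target length_ebs_nodes[OF b] by (intro nth_equalityI) simp_all
  moreover have "d ! ?p = ?s" using p da by (simp add: d_def)
  ultimately show thesis by (intro that[OF k d _ t])
qed

lemma inj_on_ebs_source_target:
  assumes "i \<in> ebs_nodes n l"
  shows "inj_on (\<lambda>(j, d). (t0 - int j, ebs_source n l i t0 j d, ebs_target n l i t0 j d))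
    (UNIV \<times> ebs_nodes n l)"
proof (rule inj_onI, clarsimp)
  fix j d d'
  assume d: "d \<in> ebs_nodes n l" and d': "d' \<in> ebs_nodes n l"
    and eq: "ebs_source n l i t0 j d = ebs_source n l i t0 j d'"
        "ebs_target n l i t0 j d = ebs_target n l i t0 j d'"
  show "d = d'"
  proof (rule nth_equalityI)
    show "length d = length d'" using length_ebs_nodes[OF d] length_ebs_nodes[OF d'] by simp
    fix q assume "q < length d"
    then have q: "q < l" using length_ebs_nodes[OF d] by simp
    have "d ! q = ebs_diff n (ebs_target n l i t0 j d) (ebs_source n l i t0 j d) q"
      using ebs_diff_target_source[OF assms d q] by simp
    also have "\<dots> = d' ! q"
      unfolding eq using ebs_diff_target_source[OF assms d' q] .
    finally show "d ! q = d' ! q" .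
  qed
qed

lemma ebs_traversing_triples_eq_image:
  assumes l: "l \<ge> 1" and n: "n \<ge> 2" and i: "i \<in> ebs_nodes n l"
  shows "{(t, a, b). a \<in> ebs_nodes n l \<and> b \<in> ebs_nodes n l
            \<and> ebs_traverses n l t a b ((i, t0), (ebs_pi n l t0 i, t0 + 1))}
    = (\<lambda>(j, d). (t0 - int j, ebs_source n l i t0 j d, ebs_target n l i t0 j d))
        ` ({..<ebs_T n l} \<times> {d \<in> ebs_nodes n l. d ! ebs_p n l t0 = ebs_s n l t0})"
  (is "?S = ?g ` ?J")
proof
  show "?S \<subseteq> ?g ` ?J"
  proof clarify
    fix t a b
    assume a: "a \<in> ebs_nodes n l" and b: "b \<in> ebs_nodes n l"
      and tr: "ebs_traverses n l t a b ((i, t0), (ebs_pi n l t0 i, t0 + 1))"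
    obtain j d where "j < ebs_T n l" "d \<in> ebs_nodes n l" "d ! ebs_p n l t0 = ebs_s n l t0"
      "t = t0 - int j" "a = ebs_source n l i t0 j d" "b = ebs_target n l i t0 j d"
      using ebs_traverses_imp_source_target[OF l n a b tr] .
    then show "(t, a, b) \<in> ?g ` ?J"
      by (intro image_eqI[of _ _ "(j, d)"]) simp_all
  qed
next
  show "?g ` ?J \<subseteq> ?S"
  proof (rule image_subsetI)
    fix x assume "x \<in> ?J"
    then show "?g x \<in> ?S"
      using ebs_traverses_source_target[OF l n i]
        ebs_source_mem_ebs_nodes[OF i] ebs_target_mem_ebs_nodes[OF i]
      by (cases x) simp
  qed
qed

theorem mainTheorem5:
  fixes n l :: nat and e :: "(nat list \<times> int) \<times> (nat list \<times> int)"
  assumes "l \<ge> 1" and "n \<ge> 2" and "ebs_physical_edge n l e"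
  shows "card {(t, a, b). a \<in> ebs_nodes n l \<and> b \<in> ebs_nodes n l \<and> ebs_traverses n l t a b e}
         = ebs_T n l * n ^ (l - 1)"
proof -
  obtain i t0 where i: "i \<in> ebs_nodes n l" and e: "e = ((i, t0), (ebs_pi n l t0 i, t0 + 1))"
    using assms(3) unfolding ebs_physical_edge_def by blast
  let ?D = "{d \<in> ebs_nodes n l. d ! ebs_p n l t0 = ebs_s n l t0}"
  have "inj_on (\<lambda>(j, d). (t0 - int j, ebs_source n l i t0 j d, ebs_target n l i t0 j d))
      ({..<ebs_T n l} \<times> ?D)"
    using inj_on_ebs_source_target[OF i] by (rule inj_on_subset) auto
  then have "card {(t, a, b). a \<in> ebs_nodes n l \<and> b \<in> ebs_nodes n l \<and> ebs_traverses n l t a b e}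
      = card ({..<ebs_T n l} \<times> ?D)"
    unfolding e ebs_traversing_triples_eq_image[OF assms(1,2) i] by (rule card_image)
  also have "\<dots> = ebs_T n l * n ^ (l - 1)"
    using card_ebs_nodes_nth_eq[OF ebs_p_less[OF assms(1,2)] ebs_s_less[OF assms(2)]]
    by (simp add: card_cartesian_product)
  finally show ?thesis .
qed

end
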